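(* For every partition $\mu$ of $n$, the $\mathbb{Q}$-linear extension $\Phi: M^\mu\to \operatorname{span}_{\mathbb{Q}}\mathcal{A}(\mu)$ is an isomorphism of graded vector spaces; equivalently, $\Phi$ restricts to a degree-preserving bijection from the set of row-strict fillings of $\mu$ onto $\mathcal{A}(\mu)$.
   Context: A row-strict filling of a partition $\mu$ of $n$ (Young diagram, left-justified rows, rows top to bottom) places $1,\dots,n$ bijectively in its boxes, increasing left to right along rows. Dimension pairs (with $h(j)=j$): $(a,b)$ is a dimension pair of $T$ if $b>a$; $b$ lies in the same column as $a$ strictly below it or in a column strictly left of $a$'s; and if the box immediately right of $a$ exists and contains $c$, then $b\le c$. $D^T_j$ is the set of dimension pairs $(a,j)$; $\Phi(T)=\prod_{j=2}^n x_j^{|D^T_j|}$; $\mathcal{A}(\mu)$ is the set of all $\Phi(T)$. $M^\mu$ is the formal $\mathbb{Q}$-span of the row-strict fillings of $\mu$, graded by number of dimension pairs; $\operatorname{span}\mathcal{A}(\mu)$ is graded by polynomial degree. *)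

theory Defs
  imports Complex_Main
begin

text \<open>A partition of n: a weakly decreasing list of positive parts summing to n.
  Row r (0-indexed, top to bottom) has length mu!r.\<close>
definition is_partition :: "nat \<Rightarrow> nat list \<Rightarrow> bool" where
  "is_partition n mu \<longleftrightarrow> sum_list mu = n \<and> (\<forall>x\<in>set mu. 0 < x) \<and> sorted_wrt (\<ge>) mu"

definition boxes :: "nat list \<Rightarrow> (nat \<times> nat) set" where
  "boxes mu = {(r, c). r < length mu \<and> c < mu ! r}"

definition row_strict_fillings :: "nat \<Rightarrow> nat list \<Rightarrow> (nat \<times> nat \<Rightarrow> nat) set" where
  "row_strict_fillings n mu =
     {T. bij_betw T (boxes mu) {1..n}
         \<and> (\<forall>p. p \<notin> boxes mu \<longrightarrow> T p = 0)
         \<and> (\<forall>r c c'. (r, c') \<in> boxes mu \<longrightarrow> c < c' \<longrightarrow> T (r, c) < T (r, c'))}"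

text \<open>Dimension pair (a,b) of T (with h(j) = j).\<close>
definition dim_pair :: "nat list \<Rightarrow> (nat \<times> nat \<Rightarrow> nat) \<Rightarrow> nat \<Rightarrow> nat \<Rightarrow> bool" where
  "dim_pair mu T a b \<longleftrightarrow>
     b > a \<and>
     (\<exists>r c r' c'. (r, c) \<in> boxes mu \<and> (r', c') \<in> boxes mu \<and> T (r, c) = a \<and> T (r', c') = b
        \<and> ((c' = c \<and> r' > r) \<or> c' < c)
        \<and> ((r, Suc c) \<in> boxes mu \<longrightarrow> b \<le> T (r, Suc c)))"

definition dim_pairs :: "nat list \<Rightarrow> (nat \<times> nat \<Rightarrow> nat) \<Rightarrow> (nat \<times> nat) set" where
  "dim_pairs mu T = {(a, b). dim_pair mu T a b}"

definition D_set :: "nat list \<Rightarrow> (nat \<times> nat \<Rightarrow> nat) \<Rightarrow> nat \<Rightarrow> (nat \<times> nat) set" where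
  "D_set mu T j = {(a, b). dim_pair mu T a b \<and> b = j}"

text \<open>Monomials in x_2,...,x_n are represented by their exponent vectors
  (nat \<Rightarrow> nat, exponent of x_j at j, zero outside {2..n}).\<close>
type_synonym monomial = "nat \<Rightarrow> nat"

definition Phi :: "nat \<Rightarrow> nat list \<Rightarrow> (nat \<times> nat \<Rightarrow> nat) \<Rightarrow> monomial" where
  "Phi n mu T = (\<lambda>j. if 2 \<le> j \<and> j \<le> n then card (D_set mu T j) else 0)"

definition A_set :: "nat \<Rightarrow> nat list \<Rightarrow> monomial set" where
  "A_set n mu = Phi n mu ` row_strict_fillings n mu"

definition mono_deg :: "nat \<Rightarrow> monomial \<Rightarrow> nat" where
  "mono_deg n m = (\<Sum>j = 2..n. m j)"

text \<open>M^mu: formal Q-span of the fillings = coefficient functions supported on the fillings.\<close>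
definition M_space :: "nat \<Rightarrow> nat list \<Rightarrow> ((nat \<times> nat \<Rightarrow> nat) \<Rightarrow> rat) set" where
  "M_space n mu = {c. \<forall>T. T \<notin> row_strict_fillings n mu \<longrightarrow> c T = 0}"

text \<open>Polynomials in x_2..x_n are coefficient functions on monomials; the span of the
  (linearly independent) monomials in A(mu) consists of the polynomials supported on A(mu).\<close>
definition span_A :: "nat \<Rightarrow> nat list \<Rightarrow> (monomial \<Rightarrow> rat) set" where
  "span_A n mu = {p. \<forall>m. m \<notin> A_set n mu \<longrightarrow> p m = 0}"

definition Phi_lin :: "nat \<Rightarrow> nat list \<Rightarrow> ((nat \<times> nat \<Rightarrow> nat) \<Rightarrow> rat) \<Rightarrow> (monomial \<Rightarrow> rat)" where
  "Phi_lin n mu c = (\<lambda>m. \<Sum>T\<in>row_strict_fillings n mu. if Phi n mu T = m then c T else 0)"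

definition M_homog :: "nat \<Rightarrow> nat list \<Rightarrow> nat \<Rightarrow> ((nat \<times> nat \<Rightarrow> nat) \<Rightarrow> rat) set" where
  "M_homog n mu d = {c \<in> M_space n mu. \<forall>T. c T \<noteq> 0 \<longrightarrow> card (dim_pairs mu T) = d}"

definition A_homog :: "nat \<Rightarrow> nat list \<Rightarrow> nat \<Rightarrow> (monomial \<Rightarrow> rat) set" where
  "A_homog n mu d = {p \<in> span_A n mu. \<forall>m. p m \<noteq> 0 \<longrightarrow> mono_deg n m = d}"

end

theory Submission
  imports Defs
begin

(* For a row-strict filling T and 0 \<le> j \<le> n let the shape of T at j be the
   row-length vector  ell T j r = #{boxes in row r with entry \<le> j}.  If j sits at the end
   of row s of this shape, then a forms a dimension pair with j exactly when a is the last
   entry of some other row r that precedes s in the order "longer rows first, ties broken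
   by row index".  Hence |D_j| is the rank of row s in that order, and the rank determines s.
   Reading Phi(T) from j = n downwards therefore recovers, step by step, the row of every
   entry and the whole chain of shapes, and the shapes determine T: so Phi is injective on
   row-strict fillings.  Summing |D_j| over j shows that Phi preserves degree.  Finally, the
   linear extension of any injection of a finite set is a bijection between the finitely
   supported coefficient functions on both sides, compatibly with any grading the injection
   preserves; applied to Phi this gives the graded isomorphism. *)

section \<open>Linear extension of an injection\<close>

definition lin_ext :: "('a \<Rightarrow> 'b) \<Rightarrow> 'a set \<Rightarrow> ('a \<Rightarrow> rat) \<Rightarrow> ('b \<Rightarrow> rat)" where
  "lin_ext f F c = (\<lambda>m. \<Sum>x\<in>F. if f x = m then c x else 0)"

definition supported_on :: "'a set \<Rightarrow> ('a \<Rightarrow> rat) set" where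
  "supported_on A = {c. \<forall>x. x \<notin> A \<longrightarrow> c x = 0}"

lemma lin_ext_at_image:
  assumes "finite F" "inj_on f F" "x \<in> F"
  shows "lin_ext f F c (f x) = c x"
proof -
  have "lin_ext f F c (f x) = (\<Sum>y\<in>F. if y = x then c y else 0)"
    unfolding lin_ext_def
    using assms(2,3) by (intro sum.cong) (auto dest: inj_onD)
  also have "\<dots> = c x" using assms(1,3) by simp
  finally show ?thesis .
qed

lemma lin_ext_outside_image: "m \<notin> f ` F \<Longrightarrow> lin_ext f F c m = 0"
  unfolding lin_ext_def by (auto intro!: sum.neutral)

(* The linear extension of an injection is a bijection of the spans; it restricts to a
   bijection between the parts cut out by conditions Q and R that f translates into
   each other (e.g. homogeneous components of a degree that f preserves). *)
lemma lin_ext_bij_betw: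
  assumes fin: "finite F" and inj: "inj_on f F"
    and QR: "\<And>x. x \<in> F \<Longrightarrow> Q x \<longleftrightarrow> R (f x)"
  shows "bij_betw (lin_ext f F)
           {c \<in> supported_on F. \<forall>x. c x \<noteq> 0 \<longrightarrow> Q x}
           {p \<in> supported_on (f ` F). \<forall>m. p m \<noteq> 0 \<longrightarrow> R m}"
    (is "bij_betw ?L ?M ?A")
proof (rule bij_betwI')
  fix c1 c2 assume c: "c1 \<in> ?M" "c2 \<in> ?M"
  show "(?L c1 = ?L c2) = (c1 = c2)"
  proof
    assume eq: "?L c1 = ?L c2"
    show "c1 = c2"
    proof
      fix x show "c1 x = c2 x"
      proof (cases "x \<in> F")
        case True then show ?thesis
          using fun_cong[OF eq, of "f x"] lin_ext_at_image[OF fin inj True] by simp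
      qed (use c in \<open>auto simp: supported_on_def\<close>)
    qed
  qed simp
next
  fix c assume c: "c \<in> ?M"
  have R: "R m" if "?L c m \<noteq> 0" for m
  proof -
    have "m \<in> f ` F" using that lin_ext_outside_image by metis
    then obtain x where x: "x \<in> F" "m = f x" by blast
    then have "c x \<noteq> 0" using that lin_ext_at_image[OF fin inj] by simp
    then show "R m" using c x QR by blast
  qed
  show "?L c \<in> ?A"
    unfolding supported_on_def using R lin_ext_outside_image[of _ f F c] by auto
next
  fix p assume p: "p \<in> ?A"
  define c where "c x = (if x \<in> F then p (f x) else 0)" for x
  have "c \<in> ?M" using p QR unfolding c_def supported_on_def by auto
  moreover have "p = ?L c"
  proof
    fix m show "p m = ?L c m"
    proof (cases "m \<in> f ` F")
      case True
      then obtain x where "x \<in> F" "m = f x" by blast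
      then show ?thesis using lin_ext_at_image[OF fin inj] unfolding c_def by simp
    next
      case False
      then show ?thesis using p lin_ext_outside_image[OF False] unfolding supported_on_def by simp
    qed
  qed
  ultimately show "\<exists>c\<in>?M. p = ?L c" by blast
qed

definition rows_before :: "(nat \<Rightarrow> nat) \<Rightarrow> nat \<Rightarrow> nat \<Rightarrow> nat set" where
  "rows_before l N s = {r. r < N \<and> (l s < l r \<or> (l r = l s \<and> r < s))}"

(* This is a strict linear order, so the number of predecessors determines the row. *)
lemma card_rows_before_strict:
  assumes "l s1 < l s2 \<or> (l s1 = l s2 \<and> s2 < s1)" "s2 < N"
  shows "card (rows_before l N s2) < card (rows_before l N s1)"
proof (rule psubset_card_mono)
  show "finite (rows_before l N s1)" unfolding rows_before_def by simp
  have "s2 \<in> rows_before l N s1" "s2 \<notin> rows_before l N s2"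
    using assms unfolding rows_before_def by auto
  moreover have "rows_before l N s2 \<subseteq> rows_before l N s1"
    using assms unfolding rows_before_def by auto
  ultimately show "rows_before l N s2 \<subset> rows_before l N s1" by blast
qed

lemma card_rows_before_inj:
  assumes "card (rows_before l N s1) = card (rows_before l N s2)" "s1 < N" "s2 < N"
  shows "s1 = s2"
  using card_rows_before_strict[of l s1 s2 N] card_rows_before_strict[of l s2 s1 N]
    assms by (metis less_irrefl linorder_neqE_nat)

lemma down_closed_eq_lessThan:
  fixes S :: "nat set"
  assumes "finite S" "\<And>x y. x \<in> S \<Longrightarrow> y < x \<Longrightarrow> y \<in> S"
  shows "S = {..<card S}"
proof (cases "S = {}")
  case False
  have "Max S \<in> S" using assms(1) False by simp
  then have "S = {..Max S}"
    using assms Max_ge[OF assms(1)] by (auto simp: order_le_less)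
  then show ?thesis by (metis card_atMost lessThan_Suc_atMost)
qed simp

lemma finite_row_boxes: "finite {c. (r, c) \<in> boxes mu \<and> P c}"
  by (rule finite_subset[of _ "{..<mu!r}"]) (auto simp: boxes_def)

lemma finite_boxes: "finite (boxes mu)"
proof -
  have "boxes mu = (SIGMA r:{..<length mu}. {..<mu!r})" unfolding boxes_def by auto
  then show ?thesis by simp
qed

lemma finite_row_strict_fillings: "finite (row_strict_fillings n mu)"
proof (rule finite_subset)
  show "row_strict_fillings n mu \<subseteq>
     {f. \<forall>x. (x \<in> boxes mu \<longrightarrow> f x \<in> {1..n}) \<and> (x \<notin> boxes mu \<longrightarrow> f x = 0)}"
    unfolding row_strict_fillings_def bij_betw_def by auto
  show "finite {f. \<forall>x. (x \<in> boxes mu \<longrightarrow> f x \<in> {1..n}) \<and> (x \<notin> boxes mu \<longrightarrow> f x = (0::nat))}"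
    using finite_boxes by (intro finite_set_of_finite_funs) auto
qed

locale rsf =
  fixes n :: nat and mu :: "nat list" and T :: "nat \<times> nat \<Rightarrow> nat"
  assumes rsf: "T \<in> row_strict_fillings n mu"
begin

lemma outside: "p \<notin> boxes mu \<Longrightarrow> T p = 0"
  using rsf unfolding row_strict_fillings_def by (cases p) auto

lemma inj: "inj_on T (boxes mu)" and img: "T ` boxes mu = {1..n}"
  and mono: "(r, c') \<in> boxes mu \<Longrightarrow> c < c' \<Longrightarrow> T (r, c) < T (r, c')"
  using rsf unfolding row_strict_fillings_def bij_betw_def by auto

lemma val: "p \<in> boxes mu \<Longrightarrow> 1 \<le> T p \<and> T p \<le> n"
  using img by auto

lemma exists_pos: "1 \<le> j \<Longrightarrow> j \<le> n \<Longrightarrow> \<exists>s c. (s, c) \<in> boxes mu \<and> T (s, c) = j"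
  using img by (metis atLeastAtMost_iff imageE prod.exhaust)

lemma same_val: "p \<in> boxes mu \<Longrightarrow> q \<in> boxes mu \<Longrightarrow> T p = T q \<Longrightarrow> p = q"
  using inj by (meson inj_onD)

end

section \<open>Shapes of a row-strict filling\<close>

definition ell :: "nat list \<Rightarrow> (nat \<times> nat \<Rightarrow> nat) \<Rightarrow> nat \<Rightarrow> nat \<Rightarrow> nat" where
  "ell mu T j r = card {c. (r, c) \<in> boxes mu \<and> T (r, c) \<le> j}"

context rsf
begin

lemma mem_shape: "(r, c) \<in> boxes mu \<and> T (r, c) \<le> j \<longleftrightarrow> c < ell mu T j r"
proof -
  let ?S = "{c. (r, c) \<in> boxes mu \<and> T (r, c) \<le> j}"
  have "?S = {..<card ?S}"
  proof (rule down_closed_eq_lessThan)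
    show "finite ?S" by (rule finite_row_boxes)
    fix x y assume "x \<in> ?S" "y < x"
    then show "y \<in> ?S" using mono[of r x y] by (auto simp: boxes_def)
  qed
  then show ?thesis unfolding ell_def by blast
qed

lemma ell_at_entry:
  assumes "(s, c) \<in> boxes mu" "T (s, c) = j"
  shows "ell mu T j s = Suc c"
proof -
  have "c < ell mu T j s" using mem_shape assms by auto
  moreover have "\<not> Suc c < ell mu T j s"
    using mem_shape[of s "Suc c" j] mono[of s "Suc c" c] assms by auto
  ultimately show ?thesis by simp
qed

lemma ell_step:
  assumes "(s, c) \<in> boxes mu" "T (s, c) = j"
  shows "ell mu T j r = ell mu T (j - 1) r + (if r = s then 1 else 0)"
proof -
  have "1 \<le> j" using val assms by auto
  have new: "{x. (r, x) \<in> boxes mu \<and> T (r, x) = j} = (if r = s then {c} else {})"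
    using assms same_val[OF _ assms(1)] by auto
  have "{x. (r, x) \<in> boxes mu \<and> T (r, x) \<le> j}
      = {x. (r, x) \<in> boxes mu \<and> T (r, x) \<le> j - 1} \<union> {x. (r, x) \<in> boxes mu \<and> T (r, x) = j}"
    using \<open>1 \<le> j\<close> by auto
  also have "card \<dots> = ell mu T (j - 1) r + card {x. (r, x) \<in> boxes mu \<and> T (r, x) = j}"
    unfolding ell_def
    using \<open>1 \<le> j\<close> by (intro card_Un_disjoint finite_row_boxes) auto
  finally show ?thesis unfolding ell_def new by simp
qed

lemma ell_full: "r < length mu \<Longrightarrow> ell mu T n r = mu ! r"
proof -
  assume "r < length mu"
  then have "{c. (r, c) \<in> boxes mu \<and> T (r, c) \<le> n} = {..<mu!r}"
    using val unfolding boxes_def by auto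
  then show ?thesis unfolding ell_def by simp
qed

section \<open>Dimension pairs ending in j\<close>

lemma dim_pair_range: "dim_pair mu T a b \<Longrightarrow> 1 \<le> a \<and> a < b \<and> b \<le> n"
  unfolding dim_pair_def using val by fastforce

lemma dim_pair_from_row_before:
  assumes s: "(s, c') \<in> boxes mu" "T (s, c') = j" and a: "dim_pair mu T a j"
  obtains r where "r \<in> rows_before (ell mu T j) (length mu) s"
    and "a = T (r, ell mu T j r - 1)"
proof -
  obtain r c r2 c2 where h: "j > a" "(r, c) \<in> boxes mu" "(r2, c2) \<in> boxes mu"
    "T (r, c) = a" "T (r2, c2) = j" "(c2 = c \<and> r2 > r) \<or> c2 < c"
    "(r, Suc c) \<in> boxes mu \<longrightarrow> j \<le> T (r, Suc c)"
    using a unfolding dim_pair_def by blast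
  have j_box: "(r2, c2) = (s, c')" using same_val[OF h(3) s(1)] h(5) s(2) by simp
  have "r \<noteq> s"
    using h j_box mono[of s c c'] by auto
  have "ell mu T j r = Suc c"
  proof -
    have "c < ell mu T j r" using mem_shape[of r c j] h(1,2,4) by auto
    moreover have "\<not> Suc c < ell mu T j r"
    proof
      assume "Suc c < ell mu T j r"
      then have b: "(r, Suc c) \<in> boxes mu" "T (r, Suc c) \<le> j" using mem_shape by blast+
      then have "(r, Suc c) = (s, c')" using h(7) same_val[OF b(1) s(1)] s(2) by simp
      then show False using \<open>r \<noteq> s\<close> by simp
    qed
    ultimately show ?thesis by simp
  qed
  moreover have "r < length mu" using h(2) unfolding boxes_def by auto
  ultimately show ?thesis
    using that[of r] h(4,6) j_box ell_at_entry[OF s] unfolding rows_before_def by auto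
qed

lemma dim_pair_of_row_before:
  assumes s: "(s, c') \<in> boxes mu" "T (s, c') = j"
    and r: "r \<in> rows_before (ell mu T j) (length mu) s"
  shows "(r, ell mu T j r - 1) \<in> boxes mu" and "dim_pair mu T (T (r, ell mu T j r - 1)) j"
proof -
  let ?l = "ell mu T j" and ?a = "T (r, ell mu T j r - 1)"
  have order: "?l s < ?l r \<or> (?l r = ?l s \<and> r < s)" and "r \<noteq> s"
    using r unfolding rows_before_def by auto
  have ls: "?l s = Suc c'" using ell_at_entry[OF s] .
  then have l_pos: "1 \<le> ?l r" using order by auto
  show b: "(r, ?l r - 1) \<in> boxes mu" using mem_shape[of r "?l r - 1" j] l_pos by auto
  have "?a \<le> j" using mem_shape[of r "?l r - 1" j] l_pos by auto
  moreover have "?a \<noteq> j" using same_val[OF b s(1)] s(2) \<open>r \<noteq> s\<close> by auto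
  ultimately have "?a < j" by simp
  moreover have "(r, Suc (?l r - 1)) \<in> boxes mu \<longrightarrow> j \<le> T (r, Suc (?l r - 1))"
    using mem_shape[of r "Suc (?l r - 1)" j] l_pos by auto
  moreover have "(c' = ?l r - 1 \<and> s > r) \<or> c' < ?l r - 1"
    using order ls by auto
  ultimately show "dim_pair mu T ?a j"
    unfolding dim_pair_def using b s by blast
qed

lemma card_D_set:
  assumes s: "(s, c') \<in> boxes mu" "T (s, c') = j"
  shows "card (D_set mu T j) = card (rows_before (ell mu T j) (length mu) s)"
proof -
  let ?R = "rows_before (ell mu T j) (length mu) s"
  let ?last = "\<lambda>r. T (r, ell mu T j r - 1)"
  have "D_set mu T j = (\<lambda>a. (a, j)) ` {a. dim_pair mu T a j}"
    unfolding D_set_def by auto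
  then have "card (D_set mu T j) = card {a. dim_pair mu T a j}"
    by (simp add: card_image inj_on_def)
  also have "{a. dim_pair mu T a j} = ?last ` ?R"
    using dim_pair_from_row_before[OF s] dim_pair_of_row_before(2)[OF s] by blast
  also have "card (?last ` ?R) = card ?R"
    using dim_pair_of_row_before(1)[OF s] same_val
    by (intro card_image inj_onI) blast
  finally show ?thesis .
qed

lemma deg_Phi: "mono_deg n (Phi n mu T) = card (dim_pairs mu T)"
proof -
  have "dim_pairs mu T = (\<Union>j\<in>{2..n}. D_set mu T j)"
    unfolding dim_pairs_def D_set_def using dim_pair_range by fastforce
  moreover have "finite (D_set mu T j)" for j
    by (rule finite_subset[of _ "{1..n} \<times> {j}"]) (auto simp: D_set_def dest!: dim_pair_range)
  ultimately have "card (dim_pairs mu T) = (\<Sum>j\<in>{2..n}. card (D_set mu T j))"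
    by (simp add: card_UN_disjoint D_set_def disjoint_iff)
  then show ?thesis unfolding mono_deg_def Phi_def by simp
qed

end

section \<open>Phi is injective\<close>

lemma same_row_of_entry:
  assumes T1: "rsf n mu T1" and T2: "rsf n mu T2"
    and shape: "\<forall>r<length mu. ell mu T1 j r = ell mu T2 j r"
    and D: "card (D_set mu T1 j) = card (D_set mu T2 j)"
    and p1: "(s1, c1) \<in> boxes mu" "T1 (s1, c1) = j"
    and p2: "(s2, c2) \<in> boxes mu" "T2 (s2, c2) = j"
  shows "s1 = s2"
proof -
  have sl: "s1 < length mu" "s2 < length mu" using p1(1) p2(1) unfolding boxes_def by auto
  have same_order: "rows_before (ell mu T1 j) (length mu) s = rows_before (ell mu T2 j) (length mu) s"
    if "s < length mu" for s
    using shape that unfolding rows_before_def by auto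
  have "card (rows_before (ell mu T2 j) (length mu) s1)
      = card (rows_before (ell mu T2 j) (length mu) s2)"
    using rsf.card_D_set[OF T1 p1] rsf.card_D_set[OF T2 p2] D same_order sl by simp
  then show ?thesis using card_rows_before_inj sl by blast
qed

lemma same_shapes:
  assumes T1: "rsf n mu T1" and T2: "rsf n mu T2" and eq: "Phi n mu T1 = Phi n mu T2"
    and j: "1 \<le> j" "j \<le> n"
  shows "\<forall>r<length mu. ell mu T1 j r = ell mu T2 j r"
proof -
  have "\<forall>r<length mu. ell mu T1 (n - k) r = ell mu T2 (n - k) r" if "k < n" for k
    using that
  proof (induction k)
    case 0 then show ?case using rsf.ell_full[OF T1] rsf.ell_full[OF T2] by simp
  next
    case (Suc k)
    let ?j = "n - k"
    have j: "2 \<le> ?j" "?j \<le> n" using Suc.prems by auto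
    obtain s1 c1 where p1: "(s1, c1) \<in> boxes mu" "T1 (s1, c1) = ?j"
      using rsf.exists_pos[OF T1, of ?j] j by auto
    obtain s2 c2 where p2: "(s2, c2) \<in> boxes mu" "T2 (s2, c2) = ?j"
      using rsf.exists_pos[OF T2, of ?j] j by auto
    have IH: "\<forall>r<length mu. ell mu T1 ?j r = ell mu T2 ?j r" using Suc by simp
    have "card (D_set mu T1 ?j) = card (D_set mu T2 ?j)"
      using j fun_cong[OF eq, of ?j] unfolding Phi_def by simp
    then have "s1 = s2" using same_row_of_entry[OF T1 T2 IH _ p1 p2] by simp
    moreover have "n - Suc k = ?j - 1" by simp
    ultimately show ?case
      using rsf.ell_step[OF T1 p1] rsf.ell_step[OF T2 p2] IH by simp
  qed
  from this[of "n - j"] j show ?thesis by simp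
qed

(* A filling is determined by its chain of shapes: T (r, c) \<le> j iff c < ell T j r. *)
lemma eq_if_same_shapes:
  assumes T1: "rsf n mu T1" and T2: "rsf n mu T2"
    and shapes: "\<And>j. 1 \<le> j \<Longrightarrow> j \<le> n \<Longrightarrow> \<forall>r<length mu. ell mu T1 j r = ell mu T2 j r"
  shows "T1 = T2"
proof
  fix p show "T1 p = T2 p"
  proof (cases "p \<in> boxes mu")
    case False then show ?thesis using rsf.outside[OF T1] rsf.outside[OF T2] by simp
  next
    case True
    obtain r c where p: "p = (r, c)" "r < length mu" using True unfolding boxes_def by auto
    have le: "Ta' p \<le> Ta p"
      if "rsf n mu Ta" "rsf n mu Ta'" "\<forall>j. 1 \<le> j \<and> j \<le> n \<longrightarrow> ell mu Ta j r = ell mu Ta' j r"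
      for Ta Ta'
      using rsf.mem_shape[OF that(1), of r c "Ta p"] rsf.mem_shape[OF that(2), of r c "Ta p"]
        rsf.val[OF that(1) True] that(3) True p(1) by auto
    show ?thesis using le[OF T1 T2] le[OF T2 T1] shapes p(2) by (metis antisym)
  qed
qed

lemma Phi_inj: "inj_on (Phi n mu) (row_strict_fillings n mu)"
proof (rule inj_onI)
  fix T1 T2 assume "T1 \<in> row_strict_fillings n mu" "T2 \<in> row_strict_fillings n mu"
    and eq: "Phi n mu T1 = Phi n mu T2"
  then have T1: "rsf n mu T1" and T2: "rsf n mu T2" by (simp_all add: rsf_def)
  show "T1 = T2" using eq_if_same_shapes[OF T1 T2 same_shapes[OF T1 T2 eq]] .
qed

theorem mainTheorem9:
  fixes n :: nat and mu :: "nat list"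
  assumes "is_partition n mu"
  shows "(\<forall>d. bij_betw (Phi_lin n mu) (M_homog n mu d) (A_homog n mu d))
       \<and> bij_betw (Phi_lin n mu) (M_space n mu) (span_A n mu)
       \<and> bij_betw (Phi n mu) (row_strict_fillings n mu) (A_set n mu)
       \<and> (\<forall>T\<in>row_strict_fillings n mu. mono_deg n (Phi n mu T) = card (dim_pairs mu T))"
proof -
  let ?F = "row_strict_fillings n mu"
  have deg: "\<forall>T\<in>?F. mono_deg n (Phi n mu T) = card (dim_pairs mu T)"
    using rsf.deg_Phi by (simp add: rsf_def)
  have lin: "Phi_lin n mu = lin_ext (Phi n mu) ?F"
    unfolding Phi_lin_def lin_ext_def by (rule ext) simp
  have spaces: "M_space n mu = supported_on ?F" "span_A n mu = supported_on (Phi n mu ` ?F)"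
    unfolding M_space_def span_A_def supported_on_def A_set_def by simp_all
  note bij = lin_ext_bij_betw[OF finite_row_strict_fillings[of n mu] Phi_inj]
  have "bij_betw (Phi_lin n mu) (M_homog n mu d) (A_homog n mu d)" for d
    using bij[of "\<lambda>T. card (dim_pairs mu T) = d" "\<lambda>m. mono_deg n m = d"] deg
    unfolding lin M_homog_def A_homog_def spaces by simp
  moreover have "bij_betw (Phi_lin n mu) (M_space n mu) (span_A n mu)"
    using bij[of "\<lambda>_. True" "\<lambda>_. True"] unfolding lin spaces by simp
  moreover have "bij_betw (Phi n mu) ?F (A_set n mu)"
    unfolding bij_betw_def A_set_def using Phi_inj by simp
  ultimately show ?thesis using deg by blast
qed

end
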